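(* Consider $n$ buyers and $m$ datasets, where buyer $i$ has budget $b_i\in\mathbb{R}_{\ge0}$ and linear valuation $v_i(\mathbf{x})=\sum_j\tau_{i,j}x_j$ with $\tau_{i,j}\ge0$. For a price vector $\mathbf{p}\in\mathbb{R}_{\ge0}^m$, consider the linear pricing function $\mathbf{x}\mapsto\mathbf{p}^\top\mathbf{x}$ and let $r_i(\mathbf{p})=r(\mathbf{p}^\top\cdot\mid v_i,b_i)$. Then $$r_i(\mathbf{p})=\min\Big(b_i,\sum_{j\in[m]:\,\tau_{i,j}\ge p_j}p_j\Big).$$ Moreover, there exists a price vector $\hat{\mathbf{p}}\in\mathbb{R}^m_{\ge0}$ with $r_i(\hat{\mathbf{p}})\ge r_i(\mathbf{p})$ for every buyer $i$ and $\hat p_j\in\{\tau_{i,j}:i\in[n]\}$ for every dataset $j$.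
   Context: For a pricing function $\mathbf{q}:[0,1]^m\to\mathbb{R}_{\ge0}$ (monotone, $\mathbf{q}(\mathbf{0})=0$), valuation $v$ and budget $b$: $F(\mathbf{q}\mid b)=\{\mathbf{x}\in[0,1]^m:\mathbf{q}(\mathbf{x})\le b\}$, $u^*=\sup_{\mathbf{x}\in F}(v(\mathbf{x})-\mathbf{q}(\mathbf{x}))$, $\mathrm{Dem}(\mathbf{q}\mid v,b)=\{\mathbf{x}\in F:v(\mathbf{x})-\mathbf{q}(\mathbf{x})=u^*\}$, and revenue $r(\mathbf{q}\mid v,b)=\sup_{\mathbf{x}\in\mathrm{Dem}}\mathbf{q}(\mathbf{x})$. *)

theory Defs
  imports "HOL-Analysis.Analysis"
begin

text \<open>Bundles of datasets are vectors x in [0,1]^m, represented as functions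
  from a finite index type 'j of datasets to the reals.\<close>

definition cube :: "('j \<Rightarrow> real) set" where
  "cube = {x. \<forall>j. 0 \<le> x j \<and> x j \<le> 1}"

definition feasible :: "(('j \<Rightarrow> real) \<Rightarrow> real) \<Rightarrow> real \<Rightarrow> ('j \<Rightarrow> real) set" where
  "feasible q b = {x \<in> cube. q x \<le> b}"

definition opt_utility :: "(('j \<Rightarrow> real) \<Rightarrow> real) \<Rightarrow> (('j \<Rightarrow> real) \<Rightarrow> real) \<Rightarrow> real \<Rightarrow> real" where
  "opt_utility q v b = (SUP x\<in>feasible q b. v x - q x)"

definition demand :: "(('j \<Rightarrow> real) \<Rightarrow> real) \<Rightarrow> (('j \<Rightarrow> real) \<Rightarrow> real) \<Rightarrow> real \<Rightarrow> ('j \<Rightarrow> real) set" where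
  "demand q v b = {x \<in> feasible q b. v x - q x = opt_utility q v b}"

definition revenue :: "(('j \<Rightarrow> real) \<Rightarrow> real) \<Rightarrow> (('j \<Rightarrow> real) \<Rightarrow> real) \<Rightarrow> real \<Rightarrow> real" where
  "revenue q v b = (SUP x\<in>demand q v b. q x)"

definition linear_price :: "('j::finite \<Rightarrow> real) \<Rightarrow> ('j \<Rightarrow> real) \<Rightarrow> real" where
  "linear_price p x = (\<Sum>j\<in>UNIV. p j * x j)"

end

theory Submission
  imports Defs
begin

text \<open>Under linear prices the buyer's problem separates by dataset. A dataset priced above
  the buyer's value is never bought, since dropping it raises utility and lowers the price;
  one priced at most her value can be bought in any affordable amount without losing
  utility. So the seller's favourite demanded bundle buys the acceptable datasets until the
  budget runs out, which gives \<open>min b (\<Sum>{p\<^sub>j | p\<^sub>j \<le> \<tau>\<^sub>j})\<close>. Raising each price \<open>p\<^sub>j\<close> to the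
  least valuation \<open>\<tau>\<^sub>i\<^sub>,\<^sub>j \<ge> p\<^sub>j\<close> keeps every dataset acceptable to the same buyers while
  increasing its price, so no buyer's revenue goes down.\<close>

lemma compact_cube: "compact (cube :: ('j::finite \<Rightarrow> real) set)"
proof -
  have "cube = PiE UNIV (\<lambda>_::'j. {0..1::real})"
    by (auto simp: cube_def PiE_def Pi_def extensional_def)
  moreover have "compactin (product_topology (\<lambda>_. euclidean) UNIV) (PiE UNIV (\<lambda>_::'j. {0..1::real}))"
    by (simp add: compactin_PiE)
  ultimately show ?thesis
    by (simp add: euclidean_product_topology)
qed

lemma compact_feasible:
  fixes q :: "('j::finite \<Rightarrow> real) \<Rightarrow> real"
  assumes "continuous_on UNIV q"
  shows "compact (feasible q b)"
proof -
  have "feasible q b = cube \<inter> {x. q x \<le> b}"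
    by (auto simp: feasible_def)
  then show ?thesis
    by (simp add: assms compact_Int_closed compact_cube closed_Collect_le)
qed

lemma demand_eq_maximizers:
  fixes q v :: "('j::finite \<Rightarrow> real) \<Rightarrow> real"
  assumes "continuous_on UNIV q" "continuous_on UNIV v"
  shows "demand q v b = {x \<in> feasible q b. \<forall>y\<in>feasible q b. v y - q y \<le> v x - q x}"
proof (cases "feasible q b = {}")
  case False
  have "continuous_on (feasible q b) (\<lambda>x. v x - q x)"
    using assms by (intro continuous_intros) (auto intro: continuous_on_subset)
  then obtain x0 where x0: "x0 \<in> feasible q b" "\<forall>y\<in>feasible q b. v y - q y \<le> v x0 - q x0"
    using continuous_attains_sup[OF compact_feasible[OF assms(1)] False] by blast
  then have "opt_utility q v b = v x0 - q x0"
    unfolding opt_utility_def by (intro cSup_eq_maximum) auto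
  with x0 show ?thesis
    unfolding demand_def by force
qed (simp add: demand_def)

lemma revenue_attained:
  fixes q v :: "('j::finite \<Rightarrow> real) \<Rightarrow> real"
  assumes "continuous_on UNIV q" "continuous_on UNIV v" "feasible q b \<noteq> {}"
  obtains x where "x \<in> demand q v b" "revenue q v b = q x" "\<forall>y\<in>demand q v b. q y \<le> q x"
proof -
  have "continuous_on UNIV (\<lambda>x. v x - q x)"
    using assms by (intro continuous_intros)
  then obtain x0 where "x0 \<in> feasible q b" "\<forall>y\<in>feasible q b. v y - q y \<le> v x0 - q x0"
    using continuous_attains_sup[OF compact_feasible[OF assms(1)] assms(3)]
    by (blast intro: continuous_on_subset)
  then have D: "demand q v b = feasible q b \<inter> {x. v x - q x = v x0 - q x0}"
    unfolding demand_eq_maximizers[OF assms(1,2)] by force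
  have "compact (demand q v b)"
    unfolding D using assms
    by (intro compact_Int_closed compact_feasible closed_Collect_eq continuous_intros) auto
  moreover have "demand q v b \<noteq> {}"
    using D \<open>x0 \<in> feasible q b\<close> by blast
  ultimately obtain x where x: "x \<in> demand q v b" "\<forall>y\<in>demand q v b. q y \<le> q x"
    using continuous_attains_sup[of "demand q v b" q] assms(1)
    by (blast intro: continuous_on_subset)
  moreover have "revenue q v b = q x"
    unfolding revenue_def using x by (intro cSup_eq_maximum) auto
  ultimately show ?thesis
    using that by blast
qed

lemma continuous_on_linear_price: "continuous_on S (linear_price p)"
proof -
  have "continuous_on UNIV (linear_price p)"
    unfolding linear_price_def by (intro continuous_intros continuous_on_mult continuous_on_sum) auto
  then show ?thesis
    using continuous_on_subset by blast
qed

lemma linear_price_zero [simp]: "linear_price p (\<lambda>_. 0) = 0"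
  by (simp add: linear_price_def)

lemma linear_price_update:
  "linear_price p (x(j := c)) = linear_price p x + p j * (c - x j)"
proof -
  have "(\<Sum>k\<in>UNIV. p k * (x(j := c)) k)
      = (\<Sum>k\<in>UNIV. p k * x k + (if k = j then p j * (c - x j) else 0))"
    by (rule sum.cong) (auto simp: algebra_simps)
  then show ?thesis
    unfolding linear_price_def by (simp add: sum.distrib)
qed

lemma feasible_linear_price_nonempty:
  assumes "0 \<le> b"
  shows "feasible (linear_price p) b \<noteq> {}"
proof -
  have "(\<lambda>_. 0) \<in> feasible (linear_price p) b"
    using assms by (simp add: feasible_def cube_def)
  then show ?thesis
    by blast
qed

lemma linear_demand_overpriced_zero:
  assumes p_nonneg: "\<forall>j. 0 \<le> p j"
    and x: "x \<in> demand (linear_price p) (linear_price t) b"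
    and overpriced: "t j < p j"
  shows "x j = 0"
proof (rule ccontr)
  assume "x j \<noteq> 0"
  moreover have x_feasible: "x \<in> cube" "linear_price p x \<le> b"
    and x_max: "\<forall>y\<in>feasible (linear_price p) b.
      linear_price t y - linear_price p y \<le> linear_price t x - linear_price p x"
    using x by (auto simp: demand_eq_maximizers continuous_on_linear_price feasible_def)
  ultimately have "0 < x j"
    by (auto simp: cube_def order_less_le)
  define y where "y = x(j := 0)"
  have "y \<in> feasible (linear_price p) b"
    using x_feasible p_nonneg \<open>0 < x j\<close>
    by (auto simp: y_def feasible_def cube_def linear_price_update
        intro: order_trans[OF _ x_feasible(2)])
  then have "linear_price t y - linear_price p y \<le> linear_price t x - linear_price p x"
    using x_max by blast
  moreover have "linear_price t y - linear_price p y
      = linear_price t x - linear_price p x + (p j - t j) * x j"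
    by (simp add: y_def linear_price_update algebra_simps)
  moreover have "0 < (p j - t j) * x j"
    using overpriced \<open>0 < x j\<close> by simp
  ultimately show False
    by linarith
qed

lemma linear_price_demand:
  assumes "\<forall>j. 0 \<le> p j" "x \<in> demand (linear_price p) (linear_price t) b"
  shows "linear_price p x = (\<Sum>j\<in>{j. p j \<le> t j}. p j * x j)"
proof -
  have "linear_price p x = (\<Sum>j\<in>{j. p j \<le> t j}. p j * x j) + (\<Sum>j\<in>-{j. p j \<le> t j}. p j * x j)"
    unfolding linear_price_def Compl_eq_Diff_UNIV
    by (simp add: sum.subset_diff[of "{j. p j \<le> t j}" UNIV])
  also have "(\<Sum>j\<in>-{j. p j \<le> t j}. p j * x j) = 0"
    using linear_demand_overpriced_zero[OF assms] by (intro sum.neutral) auto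
  finally show ?thesis
    by simp
qed

lemma linear_demand_buy_more:
  assumes x: "x \<in> demand (linear_price p) (linear_price t) b"
    and acceptable: "p j \<le> t j"
    and "0 \<le> d" "x j + d \<le> 1" "linear_price p x + p j * d \<le> b"
  shows "x(j := x j + d) \<in> demand (linear_price p) (linear_price t) b"
proof -
  let ?y = "x(j := x j + d)"
  have x_feasible: "x \<in> cube"
    and x_max: "\<forall>z\<in>feasible (linear_price p) b.
      linear_price t z - linear_price p z \<le> linear_price t x - linear_price p x"
    using x by (auto simp: demand_eq_maximizers continuous_on_linear_price feasible_def)
  have "?y \<in> feasible (linear_price p) b"
    using x_feasible assms(3-5) by (auto simp: feasible_def cube_def linear_price_update)
  moreover have "linear_price t x - linear_price p x \<le> linear_price t ?y - linear_price p ?y"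
    using acceptable \<open>0 \<le> d\<close> by (simp add: linear_price_update algebra_simps mult_left_mono)
  then have "\<forall>z\<in>feasible (linear_price p) b.
      linear_price t z - linear_price p z \<le> linear_price t ?y - linear_price p ?y"
    using x_max by fastforce
  ultimately show ?thesis
    by (simp add: demand_eq_maximizers continuous_on_linear_price)
qed

theorem revenue_linear_price:
  assumes p_nonneg: "\<forall>j. 0 \<le> p j" and "0 \<le> b"
  shows "revenue (linear_price p) (linear_price t) b = min b (\<Sum>j\<in>{j. p j \<le> t j}. p j)"
proof -
  let ?P = "linear_price p" and ?D = "demand (linear_price p) (linear_price t) b"
  let ?T = "\<Sum>j\<in>{j. p j \<le> t j}. p j"
  obtain x where x: "x \<in> ?D" "revenue ?P (linear_price t) b = ?P x" "\<forall>y\<in>?D. ?P y \<le> ?P x"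
    using revenue_attained[OF continuous_on_linear_price continuous_on_linear_price
        feasible_linear_price_nonempty[OF \<open>0 \<le> b\<close>]] by blast
  have x_cube: "0 \<le> x j" "x j \<le> 1" for j
    using x(1) by (auto simp: demand_def feasible_def cube_def)
  have "?P x \<le> b"
    using x(1) by (simp add: demand_def feasible_def)
  moreover have "?P x \<le> ?T"
    unfolding linear_price_demand[OF p_nonneg x(1)]
    using x_cube p_nonneg by (intro sum_mono) (simp add: mult_left_le)
  moreover have "min b ?T \<le> ?P x"
  proof (rule ccontr)
    assume "\<not> min b ?T \<le> ?P x"
    then have below: "?P x < b" "?P x < ?T"
      by auto
    have "\<exists>j\<in>{j. p j \<le> t j}. p j * x j < p j"
    proof (rule ccontr)
      assume "\<not> ?thesis"
      then have "?T \<le> ?P x"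
        unfolding linear_price_demand[OF p_nonneg x(1)] by (intro sum_mono) auto
      with below show False
        by simp
    qed
    then obtain j where j: "p j \<le> t j" "p j * x j < p j"
      by blast
    then have "0 < p j" "x j < 1"
      using p_nonneg[rule_format, of j] x_cube[of j] by (auto simp: order_less_le)
    define d where "d = min (1 - x j) ((b - ?P x) / p j)"
    have "0 < d" "x j + d \<le> 1" "?P x + p j * d \<le> b"
      using \<open>0 < p j\<close> \<open>x j < 1\<close> below by (auto simp: d_def min_def field_simps)
    then have "x(j := x j + d) \<in> ?D"
      using linear_demand_buy_more[OF x(1) j(1)] by simp
    then have "?P x + p j * d \<le> ?P x"
      using x(3) by (auto simp: linear_price_update)
    then show False
      using mult_pos_pos[OF \<open>0 < p j\<close> \<open>0 < d\<close>] by linarith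
  qed
  ultimately show ?thesis
    using x(2) by linarith
qed

text \<open>If every buyer values dataset \<open>j\<close> below \<open>p j\<close>, it earns nothing at either price,
  so any valuation will do there; we take the largest.\<close>

definition lift_price :: "('i::finite \<Rightarrow> 'j \<Rightarrow> real) \<Rightarrow> ('j \<Rightarrow> real) \<Rightarrow> 'j \<Rightarrow> real" where
  "lift_price \<tau> p j =
    (if \<exists>i. p j \<le> \<tau> i j then Min {\<tau> i j | i. p j \<le> \<tau> i j} else Max (range (\<lambda>i. \<tau> i j)))"

lemma finite_valuations_above:
  fixes \<tau> :: "'i::finite \<Rightarrow> 'j \<Rightarrow> real"
  shows "finite {\<tau> i j | i. p j \<le> \<tau> i j}"
  by (rule finite_subset[of _ "range (\<lambda>i. \<tau> i j)"]) auto

lemma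
  fixes \<tau> :: "'i::finite \<Rightarrow> 'j \<Rightarrow> real"
  assumes "p j \<le> \<tau> i j"
  shows le_lift_price: "p j \<le> lift_price \<tau> p j"
    and lift_price_le: "lift_price \<tau> p j \<le> \<tau> i j"
proof -
  let ?S = "{\<tau> i j | i. p j \<le> \<tau> i j}"
  have nonempty: "?S \<noteq> {}" and lift: "lift_price \<tau> p j = Min ?S"
    using assms by (auto simp: lift_price_def)
  have "Min ?S \<in> ?S"
    by (rule Min_in[OF finite_valuations_above[of \<tau> j p] nonempty])
  then show "p j \<le> lift_price \<tau> p j"
    unfolding lift by auto
  have "Min ?S \<le> \<tau> i j"
    using assms by (intro Min_le finite_valuations_above) auto
  then show "lift_price \<tau> p j \<le> \<tau> i j"
    unfolding lift .
qed

lemma lift_price_in_valuations: "lift_price \<tau> p j \<in> {\<tau> i j | i. True}"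
proof (cases "\<exists>i. p j \<le> \<tau> i j")
  case True
  then have "Min {\<tau> i j | i. p j \<le> \<tau> i j} \<in> {\<tau> i j | i. p j \<le> \<tau> i j}"
    by (intro Min_in finite_valuations_above) auto
  with True show ?thesis
    by (auto simp: lift_price_def)
next
  case False
  have "Max (range (\<lambda>i. \<tau> i j)) \<in> range (\<lambda>i. \<tau> i j)"
    by (intro Max_in) auto
  then obtain i where "Max (range (\<lambda>i. \<tau> i j)) = \<tau> i j"
    by blast
  with False have "lift_price \<tau> p j = \<tau> i j"
    by (simp add: lift_price_def)
  then show ?thesis
    by blast
qed

lemma sum_acceptable_prices_mono:
  fixes p q t :: "'j::finite \<Rightarrow> real"
  assumes "\<forall>j. 0 \<le> q j" "\<forall>j. p j \<le> t j \<longrightarrow> p j \<le> q j \<and> q j \<le> t j"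
  shows "(\<Sum>j\<in>{j. p j \<le> t j}. p j) \<le> (\<Sum>j\<in>{j. q j \<le> t j}. q j)"
proof -
  have "(\<Sum>j\<in>{j. p j \<le> t j}. p j) \<le> (\<Sum>j\<in>{j. p j \<le> t j}. q j)"
    using assms(2) by (intro sum_mono) auto
  also have "\<dots> \<le> (\<Sum>j\<in>{j. q j \<le> t j}. q j)"
    using assms by (intro sum_mono2) auto
  finally show ?thesis .
qed

theorem mainTheorem4:
  fixes \<tau> :: "'i::finite \<Rightarrow> 'j::finite \<Rightarrow> real"
    and b :: "'i \<Rightarrow> real"
    and p :: "'j \<Rightarrow> real"
  assumes tau_nonneg: "\<forall>i j. 0 \<le> \<tau> i j"
    and b_nonneg: "\<forall>i. 0 \<le> b i"
    and p_nonneg: "\<forall>j. 0 \<le> p j"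
  shows "(\<forall>i. revenue (linear_price p) (linear_price (\<tau> i)) (b i)
              = min (b i) (\<Sum>j\<in>{j. p j \<le> \<tau> i j}. p j))
       \<and> (\<exists>ph :: 'j \<Rightarrow> real.
            (\<forall>j. 0 \<le> ph j)
          \<and> (\<forall>i. revenue (linear_price ph) (linear_price (\<tau> i)) (b i)
                 \<ge> revenue (linear_price p) (linear_price (\<tau> i)) (b i))
          \<and> (\<forall>j. ph j \<in> {\<tau> i j | i. True}))"
proof -
  let ?ph = "lift_price \<tau> p"
  have ph_nonneg: "\<forall>j. 0 \<le> ?ph j"
  proof
    fix j
    show "0 \<le> ?ph j"
      using lift_price_in_valuations[of \<tau> p j] tau_nonneg by auto
  qed
  have revenue_eq: "revenue (linear_price q) (linear_price (\<tau> i)) (b i)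
      = min (b i) (\<Sum>j\<in>{j. q j \<le> \<tau> i j}. q j)" if "\<forall>j. 0 \<le> q j" for q i
    using revenue_linear_price that b_nonneg by blast
  have "(\<Sum>j\<in>{j. p j \<le> \<tau> i j}. p j) \<le> (\<Sum>j\<in>{j. ?ph j \<le> \<tau> i j}. ?ph j)" for i
    using ph_nonneg le_lift_price lift_price_le by (intro sum_acceptable_prices_mono) auto
  then have "revenue (linear_price p) (linear_price (\<tau> i)) (b i)
      \<le> revenue (linear_price ?ph) (linear_price (\<tau> i)) (b i)" for i
    unfolding revenue_eq[OF p_nonneg] revenue_eq[OF ph_nonneg] by (intro min.mono order_refl)
  then show ?thesis
    using revenue_eq[OF p_nonneg] ph_nonneg lift_price_in_valuations[of \<tau> p] by blast
qed

end
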